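(* Let $d\ge2$, $m,c>0$ and $p,p_*\in\mathbb{R}^d$ with $p\neq p_*$. Then \[ \tilde\Lambda\,\Pi_{\hat k^\perp}\,\tilde\Lambda=\frac{\big((p^\mu\cdot p_{*\mu})^2-(mc)^4\big)I_d-(mc)^2\,(p\otimes p+p_*\otimes p_* )+(p^\mu\cdot p_{*\mu})\,(p\otimes p_*+p_*\otimes p)}{(p^\mu\cdot p_{*\mu})^2-(mc)^4}, \] where $p^\mu\cdot p_{*\mu}=p_0p_{0*}-p\cdot p_*$.
   Context: $p_0=\sqrt{(mc)^2+|p|^2}$, $p_{0*}=\sqrt{(mc)^2+|p_*|^2}$, $p^\mu=(p_0,p)$, $p_*^\mu=(p_{0*},p_* )$. Define $s=(p_0+p_{0*})^2-|p+p_*|^2$, $v=\frac{p+p_*}{p_0+p_{0*}}$, $\rho=\frac{p_0+p_{0*}}{\sqrt s}$, the symmetric matrix $\tilde\Lambda=I_d+(\rho-1)\frac{v\otimes v}{|v|^2}$ ($=I_d$ if $v=0$), and the Lorentz transformation $\Lambda=\begin{pmatrix}\rho&-\rho v^T\\-\rho v&\tilde\Lambda\end{pmatrix}$. Let $\tilde p,\tilde p_*$ be the spatial parts of $\Lambda p^\mu$, $\Lambda p_*^\mu$, $\hat k=\frac{\tilde p-\tilde p_*}{|\tilde p-\tilde p_*|}$, and $\Pi_{\hat k^\perp}=I_d-\hat k\otimes\hat k$. *)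

theory Defs
  imports "HOL-Analysis.Analysis"
begin

definition outer :: "real^'d \<Rightarrow> real^'d \<Rightarrow> real^'d^'d" where
  "outer a b = (\<chi> i j. a $ i * b $ j)"

definition energy :: "real \<Rightarrow> real \<Rightarrow> real^'d \<Rightarrow> real" where
  "energy m c p = sqrt ((m*c)^2 + (norm p)^2)"

definition mandelstam_s :: "real \<Rightarrow> real \<Rightarrow> real^'d \<Rightarrow> real^'d \<Rightarrow> real" where
  "mandelstam_s m c p q = (energy m c p + energy m c q)^2 - (norm (p + q))^2"

definition vel :: "real \<Rightarrow> real \<Rightarrow> real^'d \<Rightarrow> real^'d \<Rightarrow> real^'d" where
  "vel m c p q = inverse (energy m c p + energy m c q) *\<^sub>R (p + q)"

definition rho :: "real \<Rightarrow> real \<Rightarrow> real^'d \<Rightarrow> real^'d \<Rightarrow> real" where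
  "rho m c p q = (energy m c p + energy m c q) / sqrt (mandelstam_s m c p q)"

definition Lambda_tilde :: "real \<Rightarrow> real \<Rightarrow> real^'d \<Rightarrow> real^'d \<Rightarrow> real^'d^'d" where
  "Lambda_tilde m c p q =
     (let v = vel m c p q in
      if v = 0 then mat 1
      else mat 1 + ((rho m c p q - 1) / (norm v)^2) *\<^sub>R outer v v)"

text \<open>Spatial part of \<Lambda> applied to the four-vector (energy m c x, x), where
  \<Lambda> = [[\<rho>, -\<rho> v^T], [-\<rho> v, \<Lambda>~]] is the boost built from p, q.\<close>
definition boost_spatial :: "real \<Rightarrow> real \<Rightarrow> real^'d \<Rightarrow> real^'d \<Rightarrow> real^'d \<Rightarrow> real^'d" where
  "boost_spatial m c p q x =
     (- (rho m c p q * energy m c x)) *\<^sub>R vel m c p q + Lambda_tilde m c p q *v x"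

definition khat :: "real \<Rightarrow> real \<Rightarrow> real^'d \<Rightarrow> real^'d \<Rightarrow> real^'d" where
  "khat m c p q =
     (let pt = boost_spatial m c p q p; qt = boost_spatial m c p q q
      in inverse (norm (pt - qt)) *\<^sub>R (pt - qt))"

definition Pi_perp :: "real^'d \<Rightarrow> real^'d^'d" where
  "Pi_perp k = mat 1 - outer k k"

definition minkowski_dot :: "real \<Rightarrow> real \<Rightarrow> real^'d \<Rightarrow> real^'d \<Rightarrow> real" where
  "minkowski_dot m c p q = energy m c p * energy m c q - p \<bullet> q"

end

theory Submission
  imports Defs
begin

text \<open>
  L = Lambda_tilde is the spatial block of the boost into the centre-of-momentum frame, with
  velocity v = P / (p_0 + p_0*), P = p + p_*, and Lorentz factor \<rho>, \<rho>^2 (1 - |v|^2) = 1.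
  Hence L is symmetric and L^2 = I + \<rho>^2 v \<otimes> v = I + P \<otimes> P / s. Since
  v \<cdot> (p - p_*) = p_0 - p_0*, the four-vector p^\<mu> - p_*^\<mu> has zero time component in that frame,
  so its boosted spatial part K = p~ - p~_* satisfies L K = p - p_*, and Lorentz invariance gives
  |K|^2 = |p - p_*|^2 - (p_0 - p_0*)^2 = 2 (p^\<mu> p_*\<mu> - (mc)^2). Therefore
  L \<Pi> L x = L^2 x - ((L K \<cdot> x) / |K|^2) L K = x + (P \<cdot> x / s) P - (u \<cdot> x / |K|^2) u with
  u = p - p_*, and s = 2 ((mc)^2 + p^\<mu> p_*\<mu>) turns these two rank-one terms into the stated
  combination by partial fractions.
\<close>

lemma outer_mult_vector: "outer a b *v x = (b \<bullet> x) *\<^sub>R a"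
  by (simp add: vec_eq_iff outer_def matrix_vector_mult_def inner_vec_def sum_distrib_left
      mult.commute mult.left_commute)

lemma Pi_perp_mult_vector: "Pi_perp k *v y = y - (k \<bullet> y) *\<^sub>R k"
  by (simp add: Pi_perp_def matrix_vector_mult_diff_rdistrib outer_mult_vector)

lemma conj_Pi_perp_mult_vector:
  fixes A :: "real^'d^'d"
  assumes sym: "\<And>x y. (A *v x) \<bullet> y = x \<bullet> (A *v y)"
  shows "(A ** Pi_perp (inverse (norm K) *\<^sub>R K) ** A) *v x
    = A *v (A *v x) - (((A *v K) \<bullet> x) / (K \<bullet> K)) *\<^sub>R (A *v K)"
proof -
  have "(A ** Pi_perp (inverse (norm K) *\<^sub>R K) ** A) *v x
      = A *v (A *v x) - (inverse (norm K) * inverse (norm K) * ((A *v K) \<bullet> x)) *\<^sub>R (A *v K)"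
    by (simp add: matrix_vector_mul_assoc[symmetric] Pi_perp_mult_vector sym
        matrix_vector_mult_diff_distrib matrix_vector_mult_scaleR)
  then show ?thesis
    by (simp add: power2_norm_eq_inner[symmetric] power2_eq_square divide_inverse mult.commute)
qed

lemma sum_diff_partial_fractions:
  fixes p q x :: "'a::real_inner" and g M :: real
  assumes "g \<noteq> M" and "g \<noteq> - M"
  shows "(((p + q) \<bullet> x) / (2*(g + M))) *\<^sub>R (p + q) - (((p - q) \<bullet> x) / (2*(g - M))) *\<^sub>R (p - q)
    = inverse (g^2 - M^2) *\<^sub>R
        (g *\<^sub>R ((q \<bullet> x) *\<^sub>R p + (p \<bullet> x) *\<^sub>R q) - M *\<^sub>R ((p \<bullet> x) *\<^sub>R p + (q \<bullet> x) *\<^sub>R q))"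
proof -
  define a b where "a = p \<bullet> x" and "b = q \<bullet> x"
  have "g - M \<noteq> 0" and "g + M \<noteq> 0"
    using assms by auto
  then have coeffs:
    "(a + b) / (2*(g + M)) - (a - b) / (2*(g - M)) = (g * b - M * a) / ((g - M) * (g + M))"
    "(a + b) / (2*(g + M)) + (a - b) / (2*(g - M)) = (g * a - M * b) / ((g - M) * (g + M))"
    by (simp_all add: field_split_simps)
  have "(((p + q) \<bullet> x) / (2*(g + M))) *\<^sub>R (p + q) - (((p - q) \<bullet> x) / (2*(g - M))) *\<^sub>R (p - q)
      = ((a + b) / (2*(g + M)) - (a - b) / (2*(g - M))) *\<^sub>R p
        + ((a + b) / (2*(g + M)) + (a - b) / (2*(g - M))) *\<^sub>R q"
    by (simp add: a_def b_def inner_add_left inner_diff_left algebra_simps)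
  also have "\<dots> = inverse ((g - M) * (g + M)) *\<^sub>R ((g * b - M * a) *\<^sub>R p + (g * a - M * b) *\<^sub>R q)"
    by (simp only: coeffs) (simp add: divide_inverse scaleR_add_right mult.commute)
  also have "(g - M) * (g + M) = g^2 - M^2"
    by (simp add: power2_eq_square algebra_simps)
  finally show ?thesis
    by (simp add: a_def b_def algebra_simps)
qed

definition spatial_boost :: "real^'d \<Rightarrow> real \<Rightarrow> real^'d^'d" where
  "spatial_boost v \<rho> =
     (if v = 0 then mat 1 else mat 1 + ((\<rho> - 1) / (norm v)^2) *\<^sub>R outer v v)"

lemma spatial_boost_mult_vector:
  \<comment> \<open>for \<open>v = 0\<close> the coefficient is \<open>0 / 0 = 0\<close>\<close>
  "spatial_boost v \<rho> *v x = x + ((\<rho> - 1) * (v \<bullet> x) / (v \<bullet> v)) *\<^sub>R v"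
  by (simp add: spatial_boost_def matrix_vector_mult_add_rdistrib outer_mult_vector
      scaleR_matrix_vector_assoc[symmetric] power2_norm_eq_inner)

lemma spatial_boost_inner_commute:
  "(spatial_boost v \<rho> *v x) \<bullet> y = x \<bullet> (spatial_boost v \<rho> *v y)"
  by (simp add: spatial_boost_mult_vector inner_add_left inner_add_right inner_commute)

lemma spatial_boost_mult_vector_self: "spatial_boost v \<rho> *v v = \<rho> *\<^sub>R v"
proof (cases "v = 0")
  case False
  then have "(\<rho> - 1) * (v \<bullet> v) / (v \<bullet> v) = \<rho> - 1" by simp
  then show ?thesis by (simp add: spatial_boost_mult_vector scaleR_diff_left)
qed simp

lemma spatial_boost_square:
  assumes "\<rho>^2 * (1 - v \<bullet> v) = 1"
  shows "spatial_boost v \<rho> *v (spatial_boost v \<rho> *v x) = x + (\<rho>^2 * (v \<bullet> x)) *\<^sub>R v"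
proof (cases "v = 0")
  case False
  define \<beta> where "\<beta> = (\<rho> - 1) / (v \<bullet> v)"
  have B: "spatial_boost v \<rho> *v y = y + (\<beta> * (v \<bullet> y)) *\<^sub>R v" for y
    by (simp add: spatial_boost_mult_vector \<beta>_def)
  have "v \<bullet> (spatial_boost v \<rho> *v x) = \<rho> * (v \<bullet> x)"
    by (simp add: spatial_boost_inner_commute[symmetric] spatial_boost_mult_vector_self inner_commute)
  then have "spatial_boost v \<rho> *v (spatial_boost v \<rho> *v x) = x + (\<beta> * (1 + \<rho>) * (v \<bullet> x)) *\<^sub>R v"
    by (simp only: B) (simp add: scaleR_add_left[symmetric] distrib_left distrib_right mult.assoc mult.left_commute)
  moreover have "\<beta> * (1 + \<rho>) = \<rho>^2"
    using assms False by (simp add: \<beta>_def field_simps power2_eq_square)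
  ultimately show ?thesis by simp
qed (simp add: spatial_boost_def)

text \<open>
  The four-vector (t, x) with v \<cdot> x = t has boosted time component \<rho> (t - v \<cdot> x) = 0 and
  boosted spatial part y.
\<close>
lemma spatial_boost_rest_frame:
  fixes v x :: "real^'d" and \<rho> t :: real
  defines "y \<equiv> spatial_boost v \<rho> *v x - (\<rho> * t) *\<^sub>R v"
  assumes boost: "\<rho>^2 * (1 - v \<bullet> v) = 1" and rest: "v \<bullet> x = t"
  shows "spatial_boost v \<rho> *v y = x" and "y \<bullet> y = x \<bullet> x - t^2"
proof -
  show By: "spatial_boost v \<rho> *v y = x"
    using spatial_boost_square[OF boost]
    by (simp add: y_def matrix_vector_mult_diff_distrib matrix_vector_mult_scaleR
        spatial_boost_mult_vector_self rest power2_eq_square)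
  have vy: "v \<bullet> y = \<rho> * t * (1 - v \<bullet> v)"
    by (simp add: y_def inner_diff_right spatial_boost_inner_commute[symmetric]
        spatial_boost_mult_vector_self rest inner_commute algebra_simps)
  have "y \<bullet> y = (spatial_boost v \<rho> *v x) \<bullet> y - \<rho> * t * (v \<bullet> y)"
    by (subst (1) y_def) (simp add: inner_diff_left)
  also have "(spatial_boost v \<rho> *v x) \<bullet> y = x \<bullet> x"
    by (simp add: spatial_boost_inner_commute By)
  also have "\<rho> * t * (v \<bullet> y) = t^2 * (\<rho>^2 * (1 - v \<bullet> v))"
    by (simp only: vy) (simp add: power2_eq_square algebra_simps)
  finally show "y \<bullet> y = x \<bullet> x - t^2"
    by (simp only: boost mult_1_right)
qed

lemma energy_squared: "(energy m c p)^2 = (m*c)^2 + p \<bullet> p"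
  by (simp add: energy_def power2_norm_eq_inner)

lemma norm_less_energy:
  assumes "m*c \<noteq> 0"
  shows "norm p < energy m c p"
proof -
  have "sqrt ((norm p)^2) < sqrt ((m*c)^2 + (norm p)^2)"
    using assms by (intro real_sqrt_less_mono) simp
  then show ?thesis by (simp add: energy_def)
qed

lemma energy_sum_pos: "m*c \<noteq> 0 \<Longrightarrow> 0 < energy m c p + energy m c q"
  using norm_less_energy[of m c p] norm_less_energy[of m c q] norm_ge_zero[of p] norm_ge_zero[of q]
  by linarith

lemma mandelstam_s_pos:
  assumes "m*c \<noteq> 0"
  shows "0 < mandelstam_s m c p q"
proof -
  have "norm (p + q) < energy m c p + energy m c q"
    using norm_triangle_ineq[of p q] norm_less_energy[OF assms, of p] norm_less_energy[OF assms, of q]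
    by linarith
  then have "(norm (p + q))^2 < (energy m c p + energy m c q)^2"
    by (simp add: power_strict_mono)
  then show ?thesis by (simp add: mandelstam_s_def)
qed

lemma mandelstam_s_eq: "mandelstam_s m c p q = 2*(m*c)^2 + 2*minkowski_dot m c p q"
  using energy_squared[of m c p] energy_squared[of m c q]
  unfolding mandelstam_s_def minkowski_dot_def power2_norm_eq_inner
  by (simp add: power2_eq_square inner_add_left inner_add_right inner_commute algebra_simps)

lemma minkowski_dot_eq:
  "2*(minkowski_dot m c p q - (m*c)^2) = (p - q) \<bullet> (p - q) - (energy m c p - energy m c q)^2"
  using energy_squared[of m c p] energy_squared[of m c q]
  by (simp add: minkowski_dot_def power2_eq_square inner_diff_left inner_diff_right
      inner_commute algebra_simps)

lemma energy_diff_less: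
  assumes "m*c \<noteq> 0" and "p \<noteq> q"
  shows "\<bar>energy m c p - energy m c q\<bar> < norm (p - q)"
proof -
  define E where "E = energy m c p + energy m c q"
  have E: "norm p + norm q < E"
    using norm_less_energy[OF assms(1), of p] norm_less_energy[OF assms(1), of q] by (simp add: E_def)
  have "(energy m c p - energy m c q) * E = (norm p - norm q) * (norm p + norm q)"
    using energy_squared[of m c p] energy_squared[of m c q]
    by (simp add: E_def power2_norm_eq_inner[symmetric] power2_eq_square algebra_simps)
  then have "\<bar>energy m c p - energy m c q\<bar> * \<bar>E\<bar> = \<bar>norm p - norm q\<bar> * \<bar>norm p + norm q\<bar>"
    by (simp only: abs_mult[symmetric])
  moreover have E0: "0 \<le> E"
    using E norm_ge_zero[of p] norm_ge_zero[of q] by linarith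
  ultimately have "\<bar>energy m c p - energy m c q\<bar> * E = \<bar>norm p - norm q\<bar> * (norm p + norm q)"
    by simp
  also have "\<dots> \<le> norm (p - q) * (norm p + norm q)"
    by (simp add: norm_triangle_ineq3 mult_right_mono)
  also have "\<dots> < norm (p - q) * E"
    using E assms(2) by simp
  finally show ?thesis
    using E0 by (rule mult_right_less_imp_less)
qed

lemma minkowski_dot_gt:
  assumes "m*c \<noteq> 0" and "p \<noteq> q"
  shows "(m*c)^2 < minkowski_dot m c p q"
proof -
  have "\<bar>energy m c p - energy m c q\<bar>^2 < (norm (p - q))^2"
    using energy_diff_less[OF assms] by (intro power_strict_mono) simp_all
  then show ?thesis
    using minkowski_dot_eq[of m c p q] by (simp add: power2_norm_eq_inner)
qed

lemma Lambda_tilde_eq_spatial_boost: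
  "Lambda_tilde m c p q = spatial_boost (vel m c p q) (rho m c p q)"
  by (simp add: Lambda_tilde_def spatial_boost_def Let_def)

lemma rho_squared:
  assumes "m*c \<noteq> 0"
  shows "(rho m c p q)^2 = (energy m c p + energy m c q)^2 / mandelstam_s m c p q"
  using mandelstam_s_pos[OF assms, of p q] by (simp add: rho_def power_divide)

lemma rho_vel_unit:
  assumes "m*c \<noteq> 0"
  shows "(rho m c p q)^2 * (1 - vel m c p q \<bullet> vel m c p q) = 1"
proof -
  define E where "E = energy m c p + energy m c q"
  have "E > 0" using energy_sum_pos[OF assms] by (simp add: E_def)
  then have "vel m c p q \<bullet> vel m c p q = ((p + q) \<bullet> (p + q)) / E^2"
    by (simp add: vel_def E_def[symmetric] power2_eq_square divide_inverse)
  moreover have "mandelstam_s m c p q = E^2 - (p + q) \<bullet> (p + q)"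
    by (simp add: mandelstam_s_def E_def power2_norm_eq_inner)
  ultimately show ?thesis
    using \<open>E > 0\<close> mandelstam_s_pos[OF assms, of p q]
    by (simp add: rho_squared[OF assms] E_def[symmetric] field_simps)
qed

lemma vel_inner_diff:
  assumes "m*c \<noteq> 0"
  shows "vel m c p q \<bullet> (p - q) = energy m c p - energy m c q"
proof -
  have "(p + q) \<bullet> (p - q) = (energy m c p + energy m c q) * (energy m c p - energy m c q)"
    using energy_squared[of m c p] energy_squared[of m c q]
    by (simp add: inner_add_left inner_diff_right inner_commute power2_eq_square algebra_simps)
  then show ?thesis
    using energy_sum_pos[OF assms, of p q] by (simp add: vel_def)
qed

lemma Lambda_tilde_square:
  assumes "m*c \<noteq> 0"
  shows "Lambda_tilde m c p q *v (Lambda_tilde m c p q *v x)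
    = x + (((p + q) \<bullet> x) / mandelstam_s m c p q) *\<^sub>R (p + q)"
proof -
  have "Lambda_tilde m c p q *v (Lambda_tilde m c p q *v x)
      = x + ((rho m c p q)^2 * (vel m c p q \<bullet> x)) *\<^sub>R vel m c p q"
    by (simp only: Lambda_tilde_eq_spatial_boost spatial_boost_square[OF rho_vel_unit[OF assms]])
  also have "\<dots> = x + ((rho m c p q)^2 / (energy m c p + energy m c q)^2 * ((p + q) \<bullet> x)) *\<^sub>R (p + q)"
    by (simp add: vel_def power2_eq_square divide_inverse ac_simps)
  also have "\<dots> = x + (((p + q) \<bullet> x) / mandelstam_s m c p q) *\<^sub>R (p + q)"
    using energy_sum_pos[OF assms, of p q] by (simp add: rho_squared[OF assms])
  finally show ?thesis .
qed

lemma boost_spatial_diff: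
  "boost_spatial m c p q p - boost_spatial m c p q q
    = Lambda_tilde m c p q *v (p - q)
      - (rho m c p q * (energy m c p - energy m c q)) *\<^sub>R vel m c p q"
  by (simp add: boost_spatial_def matrix_vector_mult_diff_distrib algebra_simps)

lemma boosted_diff_rest_frame:
  fixes m c :: real and p q :: "real^'d"
  assumes mc: "m*c \<noteq> 0"
  defines "K \<equiv> boost_spatial m c p q p - boost_spatial m c p q q"
  shows "Lambda_tilde m c p q *v K = p - q"
    and "K \<bullet> K = 2*(minkowski_dot m c p q - (m*c)^2)"
  using spatial_boost_rest_frame[OF rho_vel_unit[OF mc] vel_inner_diff[OF mc]]
  unfolding minkowski_dot_eq
  by (simp_all add: K_def boost_spatial_diff Lambda_tilde_eq_spatial_boost)

lemma Lambda_tilde_Pi_perp_Lambda_tilde_mult_vector: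
  fixes m c :: real and p q x :: "real^'d"
  assumes mc: "m*c \<noteq> 0"
  shows "(Lambda_tilde m c p q ** Pi_perp (khat m c p q) ** Lambda_tilde m c p q) *v x
    = x + ((((p + q) \<bullet> x) / (2*(minkowski_dot m c p q + (m*c)^2))) *\<^sub>R (p + q)
        - (((p - q) \<bullet> x) / (2*(minkowski_dot m c p q - (m*c)^2))) *\<^sub>R (p - q))"
proof -
  define L K where "L = Lambda_tilde m c p q"
    and "K = boost_spatial m c p q p - boost_spatial m c p q q"
  have L_sym: "(L *v y) \<bullet> z = y \<bullet> (L *v z)" for y z
    by (simp add: L_def Lambda_tilde_eq_spatial_boost spatial_boost_inner_commute)
  have "khat m c p q = inverse (norm K) *\<^sub>R K"
    by (simp add: khat_def K_def Let_def)
  then have "(L ** Pi_perp (khat m c p q) ** L) *v x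
      = L *v (L *v x) - (((L *v K) \<bullet> x) / (K \<bullet> K)) *\<^sub>R (L *v K)"
    by (simp only: conj_Pi_perp_mult_vector[OF L_sym])
  moreover have "mandelstam_s m c p q = 2*(minkowski_dot m c p q + (m*c)^2)"
    by (simp add: mandelstam_s_eq)
  ultimately show ?thesis
    using boosted_diff_rest_frame[OF mc, of p q]
    by (simp add: L_def K_def Lambda_tilde_square[OF mc])
qed

lemma outer_combination_mult_vector:
  fixes p q x :: "real^'d" and G M g :: real
  assumes "G \<noteq> 0"
  shows "(inverse G *\<^sub>R (G *\<^sub>R mat 1 - M *\<^sub>R (outer p p + outer q q) + g *\<^sub>R (outer p q + outer q p))) *v x
    = x + inverse G *\<^sub>R (g *\<^sub>R ((q \<bullet> x) *\<^sub>R p + (p \<bullet> x) *\<^sub>R q) - M *\<^sub>R ((p \<bullet> x) *\<^sub>R p + (q \<bullet> x) *\<^sub>R q))"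
proof -
  have "x = inverse G *\<^sub>R (G *\<^sub>R x)"
    using assms by simp
  then show ?thesis
    by (simp add: scaleR_matrix_vector_assoc[symmetric] matrix_vector_mult_add_rdistrib
        matrix_vector_mult_diff_rdistrib outer_mult_vector algebra_simps)
qed

theorem propositionA4:
  fixes m c :: real and p q :: "real^'d"
  assumes "CARD('d) \<ge> 2" and "m > 0" and "c > 0" and "p \<noteq> q"
  shows "Lambda_tilde m c p q ** Pi_perp (khat m c p q) ** Lambda_tilde m c p q
    = inverse ((minkowski_dot m c p q)^2 - (m*c)^4) *\<^sub>R
        ( ((minkowski_dot m c p q)^2 - (m*c)^4) *\<^sub>R mat 1
          - (m*c)^2 *\<^sub>R (outer p p + outer q q)
          + minkowski_dot m c p q *\<^sub>R (outer p q + outer q p))"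
proof -
  define M g where "M = (m*c)^2" and "g = minkowski_dot m c p q"
  have mc: "m*c \<noteq> 0"
    using assms by simp
  have "0 < M" and "M < g"
    using mc minkowski_dot_gt[OF mc assms(4)] by (simp_all add: M_def g_def)
  then have "g \<noteq> M" and "g \<noteq> - M" and "g^2 - M^2 \<noteq> 0"
    using power_strict_mono[of M g 2] by auto
  have "(Lambda_tilde m c p q ** Pi_perp (khat m c p q) ** Lambda_tilde m c p q) *v x
      = (inverse (g^2 - M^2) *\<^sub>R ((g^2 - M^2) *\<^sub>R mat 1
          - M *\<^sub>R (outer p p + outer q q) + g *\<^sub>R (outer p q + outer q p))) *v x" for x
    by (simp only: Lambda_tilde_Pi_perp_Lambda_tilde_mult_vector[OF mc]
        sum_diff_partial_fractions[OF \<open>g \<noteq> M\<close> \<open>g \<noteq> - M\<close>]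
        outer_combination_mult_vector[OF \<open>g^2 - M^2 \<noteq> 0\<close>] flip: M_def g_def)
  then show ?thesis
    by (simp add: matrix_eq M_def g_def power_mult_distrib[symmetric])
qed

end
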